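(* Let $X$ be a Banach lattice and $S$ a convex $C_0$-semigroup on $X$. Let $x\in X$ with $\sup_{h\in(0,h_0]}\big\|\frac{S(h)x-x}{h}\big\|<\infty$ for some $h_0>0$. Then the map $[0,\infty)\to X$, $t\mapsto S(t)x$ is locally Lipschitz continuous, i.e. for every $T>0$ there exists $L_T\ge0$ with $\|S(t)x-S(s)x\|\le L_T|t-s|$ for all $s,t\in[0,T]$.
   Context: An operator $T\colon X\to X$ is convex if $T(\lambda x+(1-\lambda)y)\le\lambda Tx+(1-\lambda)Ty$ for all $x,y\in X$, $\lambda\in[0,1]$, and bounded if $\sup_{\|x\|\le r}\|Tx\|<\infty$ for all $r>0$. A convex $C_0$-semigroup is a family $(S(t))_{t\ge0}$ of bounded convex operators $X\to X$ with $S(0)=\mathrm{id}$, $S(t+s)=S(t)S(s)$ for all $s,t\ge0$, and $S(t)x\to x$ as $t\downarrow0$ for all $x$. *)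

theory Defs
  imports "HOL-Analysis.Analysis"
begin

class banach_lattice = banach + ordered_real_vector + lattice +
  assumes lattice_norm_mono: "sup x (- x) \<le> sup y (- y) \<Longrightarrow> norm x \<le> norm y"

definition convex_operator :: "('a::banach_lattice \<Rightarrow> 'a) \<Rightarrow> bool" where
  "convex_operator T \<longleftrightarrow>
     (\<forall>x y. \<forall>l::real. 0 \<le> l \<and> l \<le> 1 \<longrightarrow>
        T (l *\<^sub>R x + (1 - l) *\<^sub>R y) \<le> l *\<^sub>R T x + (1 - l) *\<^sub>R T y)"

definition bounded_operator :: "('a::real_normed_vector \<Rightarrow> 'b::real_normed_vector) \<Rightarrow> bool" where
  "bounded_operator T \<longleftrightarrow> (\<forall>r>0. \<exists>C. \<forall>x. norm x \<le> r \<longrightarrow> norm (T x) \<le> C)"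

text \<open>A convex C0-semigroup, indexed by t \<ge> 0 (values of S at negative t are irrelevant).\<close>
definition convex_C0_semigroup :: "(real \<Rightarrow> 'a::banach_lattice \<Rightarrow> 'a) \<Rightarrow> bool" where
  "convex_C0_semigroup S \<longleftrightarrow>
     (\<forall>t\<ge>0. convex_operator (S t) \<and> bounded_operator (S t)) \<and>
     S 0 = id \<and>
     (\<forall>s\<ge>0. \<forall>t\<ge>0. S (t + s) = S t \<circ> S s) \<and>
     (\<forall>x. ((\<lambda>t. S t x) \<longlongrightarrow> x) (at_right 0))"

end

theory Submission
  imports Defs
begin

text \<open>A convex operator that is bounded on a ball is Lipschitz on the half ball: convexity
  squeezes T y' - T y between two elements of controlled norm, and a lattice norm bounds
  everything squeezed in this way. A Baire category argument (uniform boundedness for families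
  of continuous convex operators) makes S bounded near x uniformly for small times, and the
  semigroup law extends this to all times in [0, T]. So the S s with s \<le> T share one Lipschitz
  constant L near x, and the difference S t x - S s x = S s (S (t - s) x) - S s x has norm at
  most L M (t - s) once t - s is small; chaining short steps gives the claim.\<close>

definition modulus :: "'a::banach_lattice \<Rightarrow> 'a" where
  "modulus a = sup a (- a)"

lemma le_modulus: "a \<le> modulus a" and neg_le_modulus: "- a \<le> modulus a"
  by (simp_all add: modulus_def)

lemma modulus_nonneg: "0 \<le> modulus a"
proof -
  have "a + - a \<le> modulus a + modulus a"
    by (intro add_mono le_modulus neg_le_modulus)
  then have "0 \<le> (1/2::real) *\<^sub>R (modulus a + modulus a)"
    by (intro scaleR_nonneg_nonneg) auto
  then show ?thesis
    by (simp add: scaleR_add_right flip: scaleR_add_left)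
qed

lemma modulus_of_nonneg: "0 \<le> a \<Longrightarrow> modulus a = a"
  unfolding modulus_def by (metis neg_le_0_iff_le order_trans sup.absorb1)

lemma norm_modulus [simp]: "norm (modulus a) = norm a"
  using lattice_norm_mono[of a "modulus a"] lattice_norm_mono[of "modulus a" a]
  by (simp add: modulus_of_nonneg[OF modulus_nonneg] flip: modulus_def)

lemma norm_le_if_between:
  fixes u a b :: "'a::banach_lattice"
  assumes "- a \<le> u" "u \<le> b"
  shows "norm u \<le> norm a + norm b"
proof -
  have "modulus u \<le> modulus a + modulus b"
    unfolding modulus_def[of u]
  proof (rule sup_least)
    show "u \<le> modulus a + modulus b"
      using assms(2) le_modulus[of b] modulus_nonneg[of a] by (meson add_increasing order_trans)
    show "- u \<le> modulus a + modulus b"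
      using assms(1) le_modulus[of a] modulus_nonneg[of b]
      by (metis add_increasing2 minus_le_iff order_trans)
  qed
  also have "\<dots> = modulus (modulus a + modulus b)"
    by (simp add: modulus_of_nonneg modulus_nonneg)
  finally have "norm u \<le> norm (modulus a + modulus b)"
    by (metis lattice_norm_mono modulus_def)
  also have "\<dots> \<le> norm a + norm b"
    using norm_triangle_ineq[of "modulus a" "modulus b"] by simp
  finally show ?thesis .
qed

lemma convex_operatorD:
  "convex_operator T \<Longrightarrow> 0 \<le> l \<Longrightarrow> l \<le> 1 \<Longrightarrow>
     T (l *\<^sub>R x + (1 - l) *\<^sub>R y) \<le> l *\<^sub>R T x + (1 - l) *\<^sub>R T y"
  unfolding convex_operator_def by blast

lemma convex_operator_midpoint_le:
  assumes "convex_operator T"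
  shows "T z \<le> (1/2) *\<^sub>R (T u + T (2 *\<^sub>R z - u))"
proof -
  have "(1/2::real) *\<^sub>R u + (1 - 1/2) *\<^sub>R (2 *\<^sub>R z - u) = z"
    by (simp add: algebra_simps)
  then show ?thesis
    using convex_operatorD[OF assms, of "1/2" u "2 *\<^sub>R z - u"] by (simp add: scaleR_add_right)
qed

lemma convex_operator_diff_le:
  assumes "convex_operator T" "k > 0"
  shows "T y' - T y \<le> (1 / (1 + k)) *\<^sub>R (T (y' + k *\<^sub>R (y' - y)) - T y)"
proof -
  define l where "l = 1 / (1 + k)"
  have "l + l * k = 1" "0 \<le> l" "l \<le> 1"
    using \<open>k > 0\<close> by (auto simp: l_def field_simps)
  have "l *\<^sub>R (y' + k *\<^sub>R (y' - y)) + (1 - l) *\<^sub>R y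
      = (l + l * k) *\<^sub>R y' + (1 - (l + l * k)) *\<^sub>R y"
    by (simp add: algebra_simps)
  with \<open>l + l * k = 1\<close> have "l *\<^sub>R (y' + k *\<^sub>R (y' - y)) + (1 - l) *\<^sub>R y = y'"
    by simp
  with convex_operatorD[OF assms(1) \<open>0 \<le> l\<close> \<open>l \<le> 1\<close>, of "y' + k *\<^sub>R (y' - y)" y]
  have "T y' \<le> l *\<^sub>R T (y' + k *\<^sub>R (y' - y)) + (1 - l) *\<^sub>R T y"
    by simp
  then have "T y' - T y \<le> l *\<^sub>R T (y' + k *\<^sub>R (y' - y)) + (1 - l) *\<^sub>R T y - T y"
    by (rule diff_right_mono)
  also have "\<dots> = l *\<^sub>R (T (y' + k *\<^sub>R (y' - y)) - T y)"
    by (simp add: algebra_simps)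
  finally show ?thesis
    by (simp add: l_def)
qed

text \<open>Extending the segment from y through y' by length R/2 stays inside the R-ball, and
  convexity bounds T y' - T y by a fraction 1/(1+k) \<le> 2 dist y' y / R of the increment of T over
  the extended segment.\<close>
lemma convex_operator_diff_le_bounded:
  fixes T :: "'a::banach_lattice \<Rightarrow> 'a"
  assumes conv: "convex_operator T" and "R > 0"
    and bound: "\<And>z. z \<in> cball p R \<Longrightarrow> norm (T z) \<le> C"
    and y: "y \<in> cball p (R/2)" and y': "y' \<in> cball p (R/2)" and "y' \<noteq> y"
  shows "\<exists>v. T y' - T y \<le> v \<and> norm v \<le> 4 * C / R * dist y' y"
proof -
  define d where "d = dist y' y"
  define k where "k = R / (2 * d)"
  define z where "z = y' + k *\<^sub>R (y' - y)"
  have "d > 0" using \<open>y' \<noteq> y\<close> by (simp add: d_def)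
  then have "k > 0" and kd: "k * d = R/2"
    using \<open>R > 0\<close> by (simp_all add: k_def)
  have "dist p z = norm ((y' - p) + k *\<^sub>R (y' - y))"
    by (simp add: z_def dist_norm norm_minus_commute algebra_simps)
  also have "\<dots> \<le> norm (y' - p) + norm (k *\<^sub>R (y' - y))"
    by (rule norm_triangle_ineq)
  also have "\<dots> \<le> R"
    using y' \<open>k > 0\<close> kd by (simp add: d_def dist_norm norm_minus_commute)
  finally have "norm (T z) \<le> C" by (intro bound) simp
  moreover have "norm (T y) \<le> C"
    using y \<open>R > 0\<close> by (intro bound) auto
  ultimately have "norm (T z - T y) \<le> 2 * C"
    using norm_triangle_ineq4[of "T z" "T y"] by linarith
  moreover have "1 / (1 + k) \<le> 2 * d / R"
    using \<open>k > 0\<close> \<open>d > 0\<close> \<open>R > 0\<close> by (simp add: k_def field_simps)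
  ultimately have "1 / (1 + k) * norm (T z - T y) \<le> 2 * d / R * (2 * C)"
    using \<open>d > 0\<close> \<open>R > 0\<close> by (intro mult_mono) auto
  then have "norm ((1 / (1 + k)) *\<^sub>R (T z - T y)) \<le> 2 * d / R * (2 * C)"
    using \<open>k > 0\<close> by simp
  also have "\<dots> = 4 * C / R * dist y' y"
    by (simp add: d_def)
  finally show ?thesis
    using convex_operator_diff_le[OF conv \<open>k > 0\<close>, of y' y] unfolding z_def by blast
qed

lemma convex_operator_lipschitz_on_half_ball:
  fixes T :: "'a::banach_lattice \<Rightarrow> 'a"
  assumes conv: "convex_operator T" and "R > 0"
    and bound: "\<And>z. z \<in> cball p R \<Longrightarrow> norm (T z) \<le> C"
  shows "(8 * C / R)-lipschitz_on (cball p (R/2)) T"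
proof (rule lipschitz_onI)
  show "0 \<le> 8 * C / R"
    using bound[of p] \<open>R > 0\<close> by (simp add: order_trans[OF norm_ge_zero])
  fix y' y assume y': "y' \<in> cball p (R/2)" and y: "y \<in> cball p (R/2)"
  show "dist (T y') (T y) \<le> 8 * C / R * dist y' y"
  proof (cases "y' = y")
    case False
    obtain v where v: "T y' - T y \<le> v" "norm v \<le> 4 * C / R * dist y' y"
      using convex_operator_diff_le_bounded[OF assms y y' False] by blast
    obtain w where w: "T y - T y' \<le> w" "norm w \<le> 4 * C / R * dist y' y"
      using convex_operator_diff_le_bounded[OF assms y' y] False by (metis dist_commute)
    have "- w \<le> T y' - T y"
      using w(1) by (metis minus_diff_eq minus_le_iff)
    then have "norm (T y' - T y) \<le> norm w + norm v"
      using v(1) by (rule norm_le_if_between)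
    then show ?thesis
      using v(2) w(2) by (simp add: dist_norm)
  qed simp
qed

lemma bounded_convex_operator_lipschitz_on_cball:
  fixes T :: "'a::banach_lattice \<Rightarrow> 'a"
  assumes conv: "convex_operator T" and "bounded_operator T" and "R > 0"
  shows "\<exists>K. K-lipschitz_on (cball p R) T"
proof -
  obtain C where C: "\<And>z. norm z \<le> norm p + 2 * R \<Longrightarrow> norm (T z) \<le> C"
    using \<open>bounded_operator T\<close> \<open>R > 0\<close> unfolding bounded_operator_def
    by (metis add_nonneg_pos mult_pos_pos norm_ge_zero zero_less_numeral)
  have "norm (T z) \<le> C" if "z \<in> cball p (2 * R)" for z
  proof (rule C)
    show "norm z \<le> norm p + 2 * R"
      using that norm_triangle_sub[of z p] by (simp add: dist_norm norm_minus_commute)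
  qed
  then have "(8 * C / (2 * R))-lipschitz_on (cball p (2 * R / 2)) T"
    using \<open>R > 0\<close> by (intro convex_operator_lipschitz_on_half_ball[OF conv]) auto
  then show ?thesis by auto
qed

lemma bounded_convex_operator_continuous:
  fixes T :: "'a::banach_lattice \<Rightarrow> 'a"
  assumes "convex_operator T" and "bounded_operator T"
  shows "continuous_on UNIV T"
proof (intro continuous_at_imp_continuous_on ballI)
  fix p :: 'a
  obtain K where "K-lipschitz_on (cball p 1) T"
    using bounded_convex_operator_lipschitz_on_cball[OF assms, of 1 p] by auto
  then have "continuous_on (cball p 1) T"
    by (rule lipschitz_on_continuous_on)
  then show "isCont T p"
    by (rule continuous_on_interior)
      (meson centre_in_ball interior_maximal ball_subset_cball open_ball zero_less_one subsetD)
qed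

lemma uniformly_bounded_on_some_ball:
  fixes T :: "'i \<Rightarrow> 'a::banach \<Rightarrow> 'b::real_normed_vector"
  assumes cont: "\<And>i. continuous_on UNIV (T i)"
    and pointwise: "\<And>z. \<exists>B. \<forall>i. norm (T i z) \<le> B"
  shows "\<exists>x0 e C. e > 0 \<and> (\<forall>i. \<forall>y\<in>cball x0 e. norm (T i y) \<le> C)"
proof -
  define F where "F m = {z. \<forall>i. norm (T i z) \<le> real m}" for m :: nat
  have closed: "closed (F m)" for m
    unfolding F_def Collect_all_eq
    by (intro closed_INT ballI closed_Collect_le continuous_on_norm continuous_on_const cont)
  have "z \<in> (\<Union>m. F m)" for z
  proof -
    obtain B where "\<forall>i. norm (T i z) \<le> B" using pointwise by blast
    then have "z \<in> F (nat \<lceil>B\<rceil>)"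
      by (auto simp: F_def intro: order_trans[OF _ real_nat_ceiling_ge])
    then show ?thesis by blast
  qed
  then have "(\<Union>m. F m) = UNIV" by blast
  have "\<exists>m. interior (F m) \<noteq> {}"
  proof (rule ccontr)
    assume "\<nexists>m. interior (F m) \<noteq> {}"
    then have "euclidean interior_of \<Union>(range F) = {}"
      using closed by (intro Baire_category_alt) (auto simp: completely_metrizable_space_euclidean)
    with \<open>(\<Union>m. F m) = UNIV\<close> show False by simp
  qed
  then obtain m x0 where "x0 \<in> interior (F m)" by blast
  then obtain e where "e > 0" "cball x0 e \<subseteq> F m"
    by (meson open_contains_cball open_interior interior_subset order_trans)
  then show ?thesis
    by (intro exI[of _ x0] exI[of _ e] exI[of _ "real m"]) (auto simp: F_def)
qed

text \<open>y is the midpoint of 2p - x0 and a point of the ball around x0, which bounds T y from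
  above; p is the midpoint of y and 2p - y, which bounds T y from below by 2 T p minus such an
  upper bound.\<close>
lemma convex_operator_bound_transfer:
  fixes T :: "'a::banach_lattice \<Rightarrow> 'a"
  assumes conv: "convex_operator T"
    and bound: "\<And>z. z \<in> cball x0 e \<Longrightarrow> norm (T z) \<le> C"
    and B1: "norm (T (2 *\<^sub>R p - x0)) \<le> B1" and B2: "norm (T p) \<le> B2"
    and y: "y \<in> cball p (e/2)"
  shows "norm (T y) \<le> B1 + C + 2 * B2"
proof -
  define u where "u w = (1/2) *\<^sub>R (T (2 *\<^sub>R p - x0) + T (2 *\<^sub>R w - (2 *\<^sub>R p - x0)))" for w
  have upper: "T w \<le> u w" for w
    unfolding u_def by (rule convex_operator_midpoint_le[OF conv])
  have norm_u: "norm (u w) \<le> (B1 + C) / 2" if "w \<in> cball p (e/2)" for w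
  proof -
    have "dist x0 (2 *\<^sub>R w - (2 *\<^sub>R p - x0)) = norm (2 *\<^sub>R (p - w))"
      by (simp add: dist_norm algebra_simps)
    also have "\<dots> = 2 * dist p w"
      by (simp add: dist_norm)
    finally have "dist x0 (2 *\<^sub>R w - (2 *\<^sub>R p - x0)) = 2 * dist p w" .
    then have "norm (T (2 *\<^sub>R w - (2 *\<^sub>R p - x0))) \<le> C"
      using that by (intro bound) simp
    then show ?thesis
      using B1 norm_triangle_ineq[of "T (2 *\<^sub>R p - x0)" "T (2 *\<^sub>R w - (2 *\<^sub>R p - x0))"]
      by (simp add: u_def)
  qed
  have "T p \<le> (1/2) *\<^sub>R (T y + T (2 *\<^sub>R p - y))"
    by (rule convex_operator_midpoint_le[OF conv])
  then have "(2::real) *\<^sub>R T p \<le> (2::real) *\<^sub>R ((1/2) *\<^sub>R (T y + T (2 *\<^sub>R p - y)))"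
    by (rule scaleR_left_mono) simp
  then have "2 *\<^sub>R T p \<le> T y + T (2 *\<^sub>R p - y)"
    by simp
  then have "2 *\<^sub>R T p \<le> T y + u (2 *\<^sub>R p - y)"
    using upper[of "2 *\<^sub>R p - y"] by (meson add_left_mono order_trans)
  then have "- (u (2 *\<^sub>R p - y) - 2 *\<^sub>R T p) \<le> T y"
    by (simp add: diff_le_eq)
  then have "norm (T y) \<le> norm (u (2 *\<^sub>R p - y) - 2 *\<^sub>R T p) + norm (u y)"
    using upper[of y] by (rule norm_le_if_between)
  also have "\<dots> \<le> (norm (u (2 *\<^sub>R p - y)) + 2 * B2) + (B1 + C) / 2"
  proof -
    have "norm (u (2 *\<^sub>R p - y) - 2 *\<^sub>R T p) \<le> norm (u (2 *\<^sub>R p - y)) + 2 * B2"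
      using norm_triangle_ineq4[of "u (2 *\<^sub>R p - y)" "2 *\<^sub>R T p"] B2 by simp
    then show ?thesis
      using norm_u[OF y] by (simp add: field_simps)
  qed
  also have "\<dots> \<le> B1 + C + 2 * B2"
  proof -
    have "dist p (2 *\<^sub>R p - y) = norm (y - p)"
      by (simp add: dist_norm algebra_simps scaleR_2)
    then have "dist p (2 *\<^sub>R p - y) = dist p y"
      by (simp add: dist_norm norm_minus_commute)
    then have "norm (u (2 *\<^sub>R p - y)) \<le> (B1 + C) / 2"
      using y by (intro norm_u) simp
    then show ?thesis by (simp add: field_simps)
  qed
  finally show ?thesis .
qed

lemma convex_uniform_boundedness:
  fixes T :: "'i \<Rightarrow> 'a::banach_lattice \<Rightarrow> 'a"
  assumes conv: "\<And>i. convex_operator (T i)" and cont: "\<And>i. continuous_on UNIV (T i)"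
    and pointwise: "\<And>z. \<exists>B. \<forall>i. norm (T i z) \<le> B"
  shows "\<exists>r>0. \<exists>C. \<forall>i. \<forall>y\<in>cball p r. norm (T i y) \<le> C"
proof -
  obtain x0 e C where "e > 0" and C: "\<And>i y. y \<in> cball x0 e \<Longrightarrow> norm (T i y) \<le> C"
    using uniformly_bounded_on_some_ball[OF cont pointwise] by blast
  obtain B1 B2 where "\<And>i. norm (T i (2 *\<^sub>R p - x0)) \<le> B1" "\<And>i. norm (T i p) \<le> B2"
    using pointwise by metis
  then have "\<forall>i. \<forall>y\<in>cball p (e/2). norm (T i y) \<le> B1 + C + 2 * B2"
    using convex_operator_bound_transfer[OF conv C] by blast
  then show ?thesis
    using \<open>e > 0\<close> by (intro exI[of _ "e/2"]) auto
qed

lemma lipschitz_on_real_interval_if_short_steps: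
  fixes f :: "real \<Rightarrow> 'a::metric_space"
  assumes "\<delta> > 0" "L \<ge> 0"
    and step: "\<And>s t. s \<in> {a..b} \<Longrightarrow> t \<in> {a..b} \<Longrightarrow> s \<le> t \<Longrightarrow> t - s \<le> \<delta> \<Longrightarrow>
      dist (f t) (f s) \<le> L * (t - s)"
  shows "L-lipschitz_on {a..b} f"
proof (rule locally_lipschitz_imp_lipschitz[OF _ _ \<open>L \<ge> 0\<close>])
  have near: "dist (f t) (f s) \<le> L * \<bar>t - s\<bar>"
    if "s \<in> {a..b}" "t \<in> {a..b}" "\<bar>t - s\<bar> \<le> \<delta>" for s t
    using step[OF that(1,2)] step[OF that(2,1)] that(3) by (cases "s \<le> t") (auto simp: dist_commute)
  show "continuous_on {a..b} f"
    unfolding continuous_on_iff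
  proof (intro ballI allI impI)
    fix s e assume "s \<in> {a..b}" "(e::real) > 0"
    show "\<exists>d>0. \<forall>t\<in>{a..b}. dist t s < d \<longrightarrow> dist (f t) (f s) < e"
    proof (intro exI[of _ "min \<delta> (e / (L + 1))"] conjI ballI impI)
      fix t assume "t \<in> {a..b}" "dist t s < min \<delta> (e / (L + 1))"
      then have "\<bar>t - s\<bar> \<le> \<delta>" "(L + 1) * \<bar>t - s\<bar> < e"
        using \<open>L \<ge> 0\<close> by (auto simp: dist_real_def field_simps)
      moreover have "L * \<bar>t - s\<bar> \<le> (L + 1) * \<bar>t - s\<bar>"
        by (simp add: mult_right_mono)
      ultimately show "dist (f t) (f s) < e"
        using near[OF \<open>s \<in> {a..b}\<close> \<open>t \<in> {a..b}\<close>] by linarith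
    qed (use \<open>\<delta> > 0\<close> \<open>e > 0\<close> \<open>L \<ge> 0\<close> in auto)
  qed
  fix s t assume "s \<in> {a..<b}" "t > s"
  then show "\<exists>z\<in>{s<..t}. dist (f z) (f s) \<le> L * (z - s)"
    using \<open>\<delta> > 0\<close> by (intro bexI[of _ "min t (min b (s + \<delta>))"] step) auto
qed

lemma convex_C0_semigroupD:
  assumes "convex_C0_semigroup S"
  shows "t \<ge> 0 \<Longrightarrow> convex_operator (S t)" "t \<ge> 0 \<Longrightarrow> bounded_operator (S t)"
    and "S 0 = id" "s \<ge> 0 \<Longrightarrow> t \<ge> 0 \<Longrightarrow> S (t + s) = S t \<circ> S s"
    and "((\<lambda>t. S t z) \<longlongrightarrow> z) (at_right 0)"
  using assms unfolding convex_C0_semigroup_def by auto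

lemma convex_C0_semigroup_tendsto_orbit:
  assumes sg: "convex_C0_semigroup S" and "tt \<longlonglongrightarrow> 0" and "\<And>n. tt n \<ge> 0"
  shows "(\<lambda>n. S (tt n) z) \<longlonglongrightarrow> z"
proof -
  have "continuous (at 0 within {0..}) (\<lambda>t. S t z)"
    using convex_C0_semigroupD(3,5)[OF sg]
    by (simp add: continuous_within at_within_Ici_at_right)
  from continuous_within_tendsto_compose'[OF this _ \<open>tt \<longlonglongrightarrow> 0\<close>] show ?thesis
    using assms(3) convex_C0_semigroupD(3)[OF sg] by simp
qed

lemma convex_C0_semigroup_bounded_near_zero:
  fixes S :: "real \<Rightarrow> 'a::banach_lattice \<Rightarrow> 'a"
  assumes sg: "convex_C0_semigroup S"
  shows "\<exists>r>0. \<exists>\<delta>>0. \<exists>C. \<forall>t\<in>{0..\<delta>}. \<forall>y\<in>cball x r. norm (S t y) \<le> C"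
proof (rule ccontr)
  assume unbounded: "\<not> ?thesis"
  have "\<exists>t y. t \<in> {0..1 / Suc n} \<and> y \<in> cball x (1 / Suc n) \<and> real n < norm (S t y)" for n
    using unbounded[unfolded not_ex] by (meson not_le zero_less_divide_1_iff of_nat_0_less_iff zero_less_Suc)
  then obtain tt yy where tt: "\<And>n. tt n \<in> {0..1 / Suc n}"
    and yy: "\<And>n. yy n \<in> cball x (1 / Suc n)" and large: "\<And>n. real n < norm (S (tt n) (yy n))"
    by metis
  have "tt \<longlonglongrightarrow> 0"
    using tt by (intro tendsto_sandwich[OF _ _ tendsto_const LIMSEQ_Suc[OF lim_1_over_n]]) auto
  then have "Bseq (\<lambda>n. S (tt n) z)" for z
    using convex_C0_semigroup_tendsto_orbit[OF sg] tt by (meson atLeastAtMost_iff convergentI convergent_imp_Bseq)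
  then have "\<exists>B. \<forall>n. norm (S (tt n) z) \<le> B" for z
    unfolding Bseq_def by blast
  moreover have "convex_operator (S (tt n))" "bounded_operator (S (tt n))" for n
    using convex_C0_semigroupD(1,2)[OF sg] tt[of n] by auto
  ultimately obtain r C where "r > 0" and C: "\<And>n y. y \<in> cball x r \<Longrightarrow> norm (S (tt n) y) \<le> C"
    using convex_uniform_boundedness[of "\<lambda>n. S (tt n)" x] bounded_convex_operator_continuous by metis
  obtain n :: nat where "n > max C (1 / r)"
    using reals_Archimedean2 by blast
  then have "1 / Suc n \<le> r"
    using \<open>r > 0\<close> by (simp add: field_simps)
  then have "norm (S (tt n) (yy n)) \<le> C"
    using yy[of n] by (intro C) auto
  with large[of n] \<open>n > max C (1 / r)\<close> show False by simp
qed

lemma convex_C0_semigroup_bounded_on_compact: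
  fixes S :: "real \<Rightarrow> 'a::banach_lattice \<Rightarrow> 'a"
  assumes sg: "convex_C0_semigroup S"
  shows "\<exists>r>0. \<exists>C. \<forall>t\<in>{0..T}. \<forall>y\<in>cball x r. norm (S t y) \<le> C"
proof -
  obtain r \<delta> C0 where "r > 0" "\<delta> > 0" and C0: "\<And>t y. t \<in> {0..\<delta>} \<Longrightarrow> y \<in> cball x r \<Longrightarrow> norm (S t y) \<le> C0"
    using convex_C0_semigroup_bounded_near_zero[OF sg, of x] by blast
  have "\<exists>C. \<forall>t\<in>{0..real n * \<delta>}. \<forall>y\<in>cball x r. norm (S t y) \<le> C" for n
  proof (induction n)
    case 0
    show ?case
      using C0 \<open>\<delta> > 0\<close> by (intro exI[of _ C0]) auto
  next
    case (Suc n)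
    then obtain Cn where Cn: "\<And>t y. t \<in> {0..real n * \<delta>} \<Longrightarrow> y \<in> cball x r \<Longrightarrow> norm (S t y) \<le> Cn"
      by blast
    obtain D where D: "\<And>z. norm z \<le> max Cn 1 \<Longrightarrow> norm (S \<delta> z) \<le> D"
      using convex_C0_semigroupD(2)[OF sg] \<open>\<delta> > 0\<close> unfolding bounded_operator_def
      by (metis less_imp_le max.strict_coboundedI2 zero_less_one)
    have "norm (S t y) \<le> max C0 D" if "t \<in> {0..real (Suc n) * \<delta>}" "y \<in> cball x r" for t y
    proof (cases "t \<le> \<delta>")
      case True
      then show ?thesis using C0[of t y] that by auto
    next
      case False
      then have "S t y = S \<delta> (S (t - \<delta>) y)"
        using convex_C0_semigroupD(4)[OF sg, of "t - \<delta>" \<delta>] \<open>\<delta> > 0\<close> by simp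
      moreover have "norm (S (t - \<delta>) y) \<le> max Cn 1"
        using Cn[of "t - \<delta>" y] that False by (auto simp: algebra_simps)
      ultimately show ?thesis using D by fastforce
    qed
    then show ?case by blast
  qed
  moreover obtain n :: nat where "T / \<delta> \<le> n"
    using real_arch_simple by blast
  then have "{0..T} \<subseteq> {0..real n * \<delta>}"
    using \<open>\<delta> > 0\<close> by (auto simp: field_simps)
  ultimately show ?thesis
    using \<open>r > 0\<close> by blast
qed

lemma convex_C0_semigroup_uniformly_lipschitz:
  fixes S :: "real \<Rightarrow> 'a::banach_lattice \<Rightarrow> 'a"
  assumes sg: "convex_C0_semigroup S"
  shows "\<exists>r>0. \<exists>L. \<forall>t\<in>{0..T}. L-lipschitz_on (cball x r) (S t)"
proof -
  obtain r C where "r > 0" and C: "\<And>t y. t \<in> {0..T} \<Longrightarrow> y \<in> cball x r \<Longrightarrow> norm (S t y) \<le> C"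
    using convex_C0_semigroup_bounded_on_compact[OF sg] by blast
  have "(8 * C / r)-lipschitz_on (cball x (r/2)) (S t)" if "t \<in> {0..T}" for t
    using convex_C0_semigroupD(1)[OF sg] that \<open>r > 0\<close> C
    by (intro convex_operator_lipschitz_on_half_ball) auto
  then show ?thesis
    using \<open>r > 0\<close> half_gt_zero by blast
qed

lemma convex_C0_semigroup_orbit_lipschitz_on:
  fixes S :: "real \<Rightarrow> 'a::banach_lattice \<Rightarrow> 'a"
  assumes sg: "convex_C0_semigroup S" and "h0 > 0" "M \<ge> 0"
    and orbit: "\<And>h. h \<in> {0..h0} \<Longrightarrow> norm (S h x - x) \<le> M * h"
  shows "\<exists>L. L-lipschitz_on {0..T} (\<lambda>t. S t x)"
proof -
  obtain r L where "r > 0" and lip: "\<And>t. t \<in> {0..T} \<Longrightarrow> L-lipschitz_on (cball x r) (S t)"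
    using convex_C0_semigroup_uniformly_lipschitz[OF sg] by blast
  define h1 where "h1 = min h0 (r / (M + 1))"
  have "h1 > 0"
    using \<open>h0 > 0\<close> \<open>r > 0\<close> \<open>M \<ge> 0\<close> by (simp add: h1_def)
  have step: "dist (S t x) (S s x) \<le> L * M * (t - s)"
    if "s \<in> {0..T}" "t \<in> {0..T}" "s \<le> t" "t - s \<le> h1" for s t
  proof -
    have orbit_step: "dist (S (t - s) x) x \<le> M * (t - s)"
      using orbit[of "t - s"] that by (simp add: h1_def dist_norm)
    also have "\<dots> \<le> M * (r / (M + 1))"
      using that \<open>M \<ge> 0\<close> by (intro mult_left_mono) (auto simp: h1_def)
    also have "\<dots> \<le> r"
      using \<open>r > 0\<close> \<open>M \<ge> 0\<close> by (simp add: field_simps)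
    finally have "S (t - s) x \<in> cball x r"
      by (simp add: dist_commute)
    then have "dist (S s (S (t - s) x)) (S s x) \<le> L * dist (S (t - s) x) x"
      using lip[OF that(1)] \<open>r > 0\<close> by (intro lipschitz_onD) auto
    also have "\<dots> \<le> L * (M * (t - s))"
      using orbit_step lipschitz_on_nonneg[OF lip[OF that(1)]] by (rule mult_left_mono)
    finally show ?thesis
      using convex_C0_semigroupD(4)[OF sg, of "t - s" s] that by (simp add: mult.assoc)
  qed
  show ?thesis
  proof (cases "T \<ge> 0")
    case True
    then have "L \<ge> 0"
      using lip[of 0] lipschitz_on_nonneg by simp
    then have "(L * M)-lipschitz_on {0..T} (\<lambda>t. S t x)"
      using \<open>h1 > 0\<close> \<open>M \<ge> 0\<close> step by (intro lipschitz_on_real_interval_if_short_steps) auto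
    then show ?thesis ..
  qed (auto intro: exI[of _ 0])
qed

theorem proposition2p7:
  fixes S :: "real \<Rightarrow> 'a::banach_lattice \<Rightarrow> 'a" and x :: 'a
  assumes "convex_C0_semigroup S"
    and "\<exists>h0>0. \<exists>M. \<forall>h\<in>{0<..h0}. norm ((1 / h) *\<^sub>R (S h x - x)) \<le> M"
  shows "\<forall>T>0. \<exists>L\<ge>0. \<forall>s\<in>{0..T}. \<forall>t\<in>{0..T}. norm (S t x - S s x) \<le> L * \<bar>t - s\<bar>"
proof (intro allI impI)
  fix T :: real
  obtain h0 M where "h0 > 0" and quotient: "\<And>h. h \<in> {0<..h0} \<Longrightarrow> norm ((1 / h) *\<^sub>R (S h x - x)) \<le> M"
    using assms(2) by blast
  have orbit: "norm (S h x - x) \<le> M * h" if "h \<in> {0..h0}" for h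
  proof (cases "h = 0")
    case False
    with that have "h > 0" by simp
    have "norm ((1 / h) *\<^sub>R (S h x - x)) \<le> M"
      using that \<open>h > 0\<close> by (intro quotient) simp
    with \<open>h > 0\<close> show ?thesis
      unfolding norm_scaleR by (simp add: field_simps)
  qed (simp add: convex_C0_semigroupD(3)[OF assms(1)])
  have "M \<ge> 0"
    using quotient[of h0] \<open>h0 > 0\<close> by (meson greaterThanAtMost_iff norm_ge_zero order_refl order_trans)
  then obtain L where "L-lipschitz_on {0..T} (\<lambda>t. S t x)"
    using convex_C0_semigroup_orbit_lipschitz_on[OF assms(1) \<open>h0 > 0\<close> _ orbit] by blast
  then show "\<exists>L\<ge>0. \<forall>s\<in>{0..T}. \<forall>t\<in>{0..T}. norm (S t x - S s x) \<le> L * \<bar>t - s\<bar>"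
    by (auto simp: lipschitz_on_def dist_norm dist_real_def)
qed

end
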